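(* Let $D=\sum_{s=1}^N\gamma_s\varpi_{i_s}[\mathsf x_s]+\mu^+[\infty]+\mu^-[0]$ be a trigonometric $\Lambda^+$-valued divisor satisfying the integrality assumption with $1\le i_N\le n-1$ (so $\gamma_N=1$), and let $D''=\sum_{s=1}^{N-1}\gamma_s\varpi_{i_s}[\mathsf x_s]+\mu^+[\infty]+(\mu^-+\varpi_{i_N})[0]$. Then, treating $\mathsf x_N$ as a parameter, the limit of $T_D(z)$ as $\mathsf x_N\to0$ equals $T_{D''}(z)$.
   Context: Let $n\ge2$, $\Lambda=\bigoplus_{j=1}^n\mathbb{Z}\epsilon_j$, $\epsilon^\vee_j$ dual basis, $\alpha^\vee_i=\epsilon^\vee_i-\epsilon^\vee_{i+1}$, $\alpha_i=\epsilon_i-\epsilon_{i+1}$, $\varpi_i=-\sum_{j>i}\epsilon_j$ ($0\le i\le n-1$), $\Lambda^+=\{\nu:\alpha^\vee_i(\nu)\ge0\ \forall i\}$. A trigonometric $\Lambda^+$-valued divisor: $D=\sum_{s=1}^N\gamma_s\varpi_{i_s}[\mathsf x_s]+\mu^+[\infty]+\mu^-[0]$, $0\le i_s\le n-1$, $\mathsf x_s\in\mathbb{C}^\times$, $\gamma_s=1$ if $i_s\ne0$, $\gamma_s\in\{\pm1\}$ if $i_s=0$, $\mu^\pm\in\Lambda^+$; $\lambda=\sum_s\gamma_s\varpi_{i_s}$, $\lambda_{\mathsf x}=\sum_{s:\mathsf x_s=\mathsf x}\gamma_s\varpi_{i_s}$ (for $\mathsf x\in\mathbb{C}^\times$). Integrality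 assumption: $\lambda+\mu^++\mu^-=\sum_{i=1}^{n-1}a_i\alpha_i$, $a_i\in\mathbb{Z}_{\ge0}$; $a_0=a_n=0$ ($D$ and $D''$ give the same $a_i$). $\widetilde{\mathcal A}^v$: the $\mathbb{C}[v,v^{-1}]$-algebra generated by $D_{i,r}^{\pm1},\mathsf w_{i,r}^{\pm1/2},(\mathsf w_{i,r}-v^m\mathsf w_{i,s})^{-1},(1-v^l)^{-1}$ ($1\le i<n$, $1\le r\ne s\le a_i$, $m\in\mathbb{Z}$, $l\ne0$) with $D_{i,r}\mathsf w^{1/2}_{j,s}=v^{\delta_{ij}\delta_{rs}}\mathsf w^{1/2}_{j,s}D_{i,r}$, $D$'s commuting, $\mathsf w^{1/2}$'s commuting, obvious inverse relations; $\mathsf w_{i,r}=(\mathsf w^{1/2}_{i,r})^2$. $\mathsf Z_i(z)=\prod_{s:i_s=i}(1-v^{-i}\mathsf x_s/z)^{\gamma_s}$, $\mathsf W_j(z)=\prod_{r=1}^{a_j}(1-\mathsf w_{j,r}/z)$, $\mathsf W_{j,r}(z)=\prod_{s\ne r}(1-\mathsf w_{j,s}/z)$, $\mathsf W_0=\mathsf W_n=1$. Trigonometric Lax matrix of $D$: $T_D(z)_{\alpha\beta}=\sum_{i=1}^{\min(\alpha,\beta)}f^D_{\alpha i}(z)g^D_i(z)e^D_{i\beta}(z)$ (rational in $z$), $e^D_{ii}=f^D_{ii}=1$, with $g^D_i(z)=\prod_{t=1}^{a_i}\mathsf w_{i,t}^{-1/2}\prod_{t=1}^{a_{i-1}}\mathsf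 w_{i-1,t}^{1/2}\, z^{\epsilon^\vee_i(\mu^+)}\frac{\mathsf W_i(v^{-i}z)}{\mathsf W_{i-1}(v^{-i-1}z)}\prod_{\mathsf x\in\mathbb{C}^\times}(1-\mathsf x/z)^{-\epsilon^\vee_i(\lambda_{\mathsf x})}$; for $i<j$: $e^D_{ij}(z)=(-1)^{i-j+1}\prod_{t=1}^{a_{j-1}}\mathsf w_{j-1,t}\prod_{k=i}^{j-2}\prod_{t=1}^{a_k}\mathsf w_{k,t}^{1/2}\prod_{t=1}^{a_{i-1}}\mathsf w_{i-1,t}^{-1/2}\sum_{r_i,\dots,r_{j-1}}\frac{\prod_{k=i}^{j-1}(v^k\mathsf w_{k,r_k})^{-\alpha^\vee_k(\mu^+)}}{1-v^i\mathsf w_{i,r_i}/z}\cdot\frac{\mathsf W_{i-1}(v^{-1}\mathsf w_{i,r_i})\prod_{k=i}^{j-2}\mathsf W_{k,r_k}(v^{-1}\mathsf w_{k+1,r_{k+1}})}{\prod_{k=i}^{j-1}\mathsf W_{k,r_k}(\mathsf w_{k,r_k})}\prod_{k=i}^{j-1}\mathsf Z_k(\mathsf w_{k,r_k})\cdot\frac{\mathsf w_{i,r_i}}{\mathsf w_{j-1,r_{j-1}}}\prod_{k=i}^{j-1}D_{k,r_k}^{-1}$; $f^D_{ji}(z)=(-1)^{i-j+1}v^{i-j}\prod_{k=i+1}^j\prod_{t=1}^{a_k}\mathsf w_{k,t}^{-1/2}\sum_{r_i,\dots,r_{j-1}}\frac{1}{1-z/(v^{i+2}\mathsf w_{i,r_i})}\cdot\frac{\mathsf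 W_j(v\mathsf w_{j-1,r_{j-1}})\prod_{k=i+1}^{j-1}\mathsf W_{k,r_k}(v\mathsf w_{k-1,r_{k-1}})}{\prod_{k=i}^{j-1}\mathsf W_{k,r_k}(\mathsf w_{k,r_k})}\cdot\frac{\mathsf w_{j-1,r_{j-1}}}{\mathsf w_{i,r_i}}\prod_{k=i}^{j-1}D_{k,r_k}$ (sums over $1\le r_k\le a_k$); here $\mu^\pm$, $\lambda_{\mathsf x}$, $\mathsf Z_k$ are those of the divisor in question. *)

theory Defs
  imports Complex_Main
begin

text \<open>A coweight-coordinate vector nu in Lambda is represented by the function
  j -> epsilon_j^vee(nu); only the values at j in {1..n} are meaningful.
  A point of the divisor is a triple (i_s, gamma_s, x_s).\<close>

type_synonym point = "nat \<times> int \<times> complex"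

record tdiv =
  pts :: "point list"
  mup :: "nat \<Rightarrow> int"
  mum :: "nat \<Rightarrow> int"

text \<open>epsilon_j^vee(varpi_i), varpi_i = - sum_{j>i} epsilon_j\<close>
definition varpi :: "nat \<Rightarrow> nat \<Rightarrow> nat \<Rightarrow> int" where
  "varpi n i j = (if i < j \<and> j \<le> n then -1 else 0)"

text \<open>epsilon_j^vee(alpha_i), alpha_i = epsilon_i - epsilon_{i+1}\<close>
definition alpha :: "nat \<Rightarrow> nat \<Rightarrow> int" where
  "alpha i j = (if j = i then 1 else if j = Suc i then -1 else 0)"

definition dominant :: "nat \<Rightarrow> (nat \<Rightarrow> int) \<Rightarrow> bool" where
  "dominant n \<mu> \<longleftrightarrow> (\<forall>i. 1 \<le> i \<and> i < n \<longrightarrow> \<mu> i - \<mu> (Suc i) \<ge> 0)"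

definition trig_divisor :: "nat \<Rightarrow> tdiv \<Rightarrow> bool" where
  "trig_divisor n D \<longleftrightarrow> 2 \<le> n \<and>
     (\<forall>(i,\<gamma>,x) \<in> set (pts D). i < n \<and> x \<noteq> 0 \<and> (if i = 0 then \<gamma> \<in> {1,-1} else \<gamma> = 1)) \<and>
     dominant n (mup D) \<and> dominant n (mum D)"

definition lam :: "nat \<Rightarrow> tdiv \<Rightarrow> nat \<Rightarrow> int" where
  "lam n D j = (\<Sum>p\<leftarrow>pts D. fst (snd p) * varpi n (fst p) j)"

definition lamx :: "nat \<Rightarrow> tdiv \<Rightarrow> complex \<Rightarrow> nat \<Rightarrow> int" where
  "lamx n D x j = (\<Sum>p\<leftarrow>pts D. if snd (snd p) = x then fst (snd p) * varpi n (fst p) j else 0)"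

definition integ_witness :: "nat \<Rightarrow> tdiv \<Rightarrow> (nat \<Rightarrow> nat) \<Rightarrow> bool" where
  "integ_witness n D a \<longleftrightarrow> (\<forall>j\<in>{1..n}.
      lam n D j + mup D j + mum D j = (\<Sum>i\<in>{1..<n}. int (a i) * alpha i j))"

definition integral :: "nat \<Rightarrow> tdiv \<Rightarrow> bool" where
  "integral n D \<longleftrightarrow> (\<exists>a. integ_witness n D a)"

text \<open>the coefficients a_i (a_0 = a_n = 0)\<close>
definition acoef :: "nat \<Rightarrow> tdiv \<Rightarrow> nat \<Rightarrow> nat" where
  "acoef n D i = (if 1 \<le> i \<and> i < n then (SOME a. integ_witness n D a) i else 0)"

text \<open>Index (i,r) of the generators w_{i,r}^{1/2}, D_{i,r}. An element of the algebra is
  represented by a finite list of monomials c * D^k (the D's on the right), where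
  c is a coefficient function of v and of the values u(i,r) = w_{i,r}^{1/2}, and
  k : idx => int is the exponent vector of D. The relation
  D_{i,r} w^{1/2}_{j,s} = v^{delta} w^{1/2}_{j,s} D_{i,r} gives
  D^k c(u) = c(v^k u) D^k.\<close>

type_synonym idx = "nat \<times> nat"
type_synonym coeffn = "complex \<Rightarrow> (idx \<Rightarrow> complex) \<Rightarrow> complex"
type_synonym opr = "(coeffn \<times> (idx \<Rightarrow> int)) list"

definition act :: "complex \<Rightarrow> (idx \<Rightarrow> int) \<Rightarrow> (idx \<Rightarrow> complex) \<Rightarrow> idx \<Rightarrow> complex" where
  "act v k u = (\<lambda>p. v powi k p * u p)"

definition omul :: "opr \<Rightarrow> opr \<Rightarrow> opr" where
  "omul A B = concat (map (\<lambda>(a,k). map (\<lambda>(b,l).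
      ((\<lambda>v u. a v u * b v (act v k u)), (\<lambda>p. k p + l p))) B) A)"

definition oscal :: "coeffn \<Rightarrow> opr" where
  "oscal c = [(c, (\<lambda>_. 0))]"

definition ocoeff :: "opr \<Rightarrow> (idx \<Rightarrow> int) \<Rightarrow> coeffn" where
  "ocoeff A m = (\<lambda>v u. \<Sum>x\<leftarrow>A. if snd x = m then fst x v u else 0)"

definition Wfun :: "nat \<Rightarrow> tdiv \<Rightarrow> (idx \<Rightarrow> complex) \<Rightarrow> nat \<Rightarrow> complex \<Rightarrow> complex" where
  "Wfun n D u j z = (\<Prod>r\<in>{1..acoef n D j}. 1 - (u (j,r))^2 / z)"

definition Wr :: "nat \<Rightarrow> tdiv \<Rightarrow> (idx \<Rightarrow> complex) \<Rightarrow> nat \<Rightarrow> nat \<Rightarrow> complex \<Rightarrow> complex" where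
  "Wr n D u j r z = (\<Prod>s\<in>{1..acoef n D j} - {r}. 1 - (u (j,s))^2 / z)"

definition Zfun :: "tdiv \<Rightarrow> complex \<Rightarrow> nat \<Rightarrow> complex \<Rightarrow> complex" where
  "Zfun D v i z = (\<Prod>p\<leftarrow>pts D. if fst p = i
      then (1 - v powi (- int i) * snd (snd p) / z) powi (fst (snd p)) else 1)"

definition gfun :: "nat \<Rightarrow> tdiv \<Rightarrow> nat \<Rightarrow> complex \<Rightarrow> coeffn" where
  "gfun n D i z = (\<lambda>v u.
     (\<Prod>t\<in>{1..acoef n D i}. inverse (u (i,t))) * (\<Prod>t\<in>{1..acoef n D (i-1)}. u (i-1,t))
     * z powi (mup D i)
     * Wfun n D u i (v powi (- int i) * z) / Wfun n D u (i-1) (v powi (- int i - 1) * z)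
     * (\<Prod>x\<in>(\<lambda>p. snd (snd p)) ` set (pts D). (1 - x / z) powi (- lamx n D x i)))"

text \<open>index tuples (r_i,...,r_{j-1}) with 1 <= r_k <= a_k, as lists; r_k = rs ! (k - i)\<close>
definition rtuples :: "nat \<Rightarrow> tdiv \<Rightarrow> nat \<Rightarrow> nat \<Rightarrow> nat list list" where
  "rtuples n D i j = product_lists (map (\<lambda>k. [1..<Suc (acoef n D k)]) [i..<j])"

text \<open>exponent vector of prod_{k=i}^{j-1} D_{k,r_k}^{sg}\<close>
definition dshift :: "nat \<Rightarrow> nat \<Rightarrow> nat list \<Rightarrow> int \<Rightarrow> idx \<Rightarrow> int" where
  "dshift i j rs sg = (\<lambda>(p,q). if i \<le> p \<and> p < j \<and> q = rs ! (p - i) then sg else 0)"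

definition ecoef :: "nat \<Rightarrow> tdiv \<Rightarrow> nat \<Rightarrow> nat \<Rightarrow> complex \<Rightarrow> nat list \<Rightarrow> coeffn" where
  "ecoef n D i j z rs = (\<lambda>v u. let w = (\<lambda>p. (u p)^2); r = (\<lambda>k. rs ! (k - i)) in
      (-1) powi (int i - int j + 1)
      * (\<Prod>t\<in>{1..acoef n D (j-1)}. w (j-1,t))
      * (\<Prod>k\<in>{i..<j-1}. \<Prod>t\<in>{1..acoef n D k}. u (k,t))
      * (\<Prod>t\<in>{1..acoef n D (i-1)}. inverse (u (i-1,t)))
      * ((\<Prod>k\<in>{i..<j}. (v ^ k * w (k, r k)) powi (- (mup D k - mup D (Suc k))))
         / (1 - v ^ i * w (i, r i) / z)
         * (Wfun n D u (i-1) (w (i, r i) / v)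
            * (\<Prod>k\<in>{i..<j-1}. Wr n D u k (r k) (w (Suc k, r (Suc k)) / v)))
         / (\<Prod>k\<in>{i..<j}. Wr n D u k (r k) (w (k, r k)))
         * (\<Prod>k\<in>{i..<j}. Zfun D v k (w (k, r k)))
         * (w (i, r i) / w (j-1, r (j-1)))))"

definition fcoef :: "nat \<Rightarrow> tdiv \<Rightarrow> nat \<Rightarrow> nat \<Rightarrow> complex \<Rightarrow> nat list \<Rightarrow> coeffn" where
  "fcoef n D j i z rs = (\<lambda>v u. let w = (\<lambda>p. (u p)^2); r = (\<lambda>k. rs ! (k - i)) in
      (-1) powi (int i - int j + 1) * v powi (int i - int j)
      * (\<Prod>k\<in>{i+1..j}. \<Prod>t\<in>{1..acoef n D k}. inverse (u (k,t)))
      * (1 / (1 - z / (v ^ (i+2) * w (i, r i)))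
         * (Wfun n D u j (v * w (j-1, r (j-1)))
            * (\<Prod>k\<in>{i+1..<j}. Wr n D u k (r k) (v * w (k-1, r (k-1)))))
         / (\<Prod>k\<in>{i..<j}. Wr n D u k (r k) (w (k, r k)))
         * (w (j-1, r (j-1)) / w (i, r i))))"

definition eop :: "nat \<Rightarrow> tdiv \<Rightarrow> nat \<Rightarrow> nat \<Rightarrow> complex \<Rightarrow> opr" where
  "eop n D i j z = (if i = j then oscal (\<lambda>v u. 1) else if i < j then
      map (\<lambda>rs. (ecoef n D i j z rs, dshift i j rs (-1))) (rtuples n D i j) else [])"

definition fop :: "nat \<Rightarrow> tdiv \<Rightarrow> nat \<Rightarrow> nat \<Rightarrow> complex \<Rightarrow> opr" where
  "fop n D j i z = (if i = j then oscal (\<lambda>v u. 1) else if i < j then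
      map (\<lambda>rs. (fcoef n D j i z rs, dshift i j rs 1)) (rtuples n D i j) else [])"

definition Lax :: "nat \<Rightarrow> tdiv \<Rightarrow> nat \<Rightarrow> nat \<Rightarrow> complex \<Rightarrow> opr" where
  "Lax n D \<alpha> \<beta> z = concat (map (\<lambda>i. omul (omul (fop n D \<alpha> i z) (oscal (gfun n D i z))) (eop n D i \<beta> z))
      [1..<Suc (min \<alpha> \<beta>)])"

definition Dpp :: "nat \<Rightarrow> tdiv \<Rightarrow> tdiv" where
  "Dpp n D = \<lparr>pts = butlast (pts D), mup = mup D,
              mum = (\<lambda>j. mum D j + varpi n (fst (last (pts D))) j)\<rparr>"

definition set_last_x :: "tdiv \<Rightarrow> complex \<Rightarrow> tdiv" where
  "set_last_x D y = D\<lparr>pts := butlast (pts D) @ [(fst (last (pts D)), fst (snd (last (pts D))), y)]\<rparr>"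

end

theory Submission
  imports Defs
begin

text \<open>Since \<open>\<gamma>\<^sub>N = 1\<close>, moving \<open>\<varpi>\<^bsub>i\<^sub>N\<^esub>\<close> from the point \<open>x\<^sub>N\<close> to \<open>\<mu>\<^sup>-\<close> leaves
  \<open>\<lambda> + \<mu>\<^sup>+ + \<mu>\<^sup>-\<close>, hence the integers \<open>a\<^sub>i\<close>, unchanged. So \<open>T\<^sub>D(z)\<close> and \<open>T\<^sub>D\<^sub>''(z)\<close> are built
  from the same generators, \<open>W\<close>'s and \<open>f\<close>'s, and \<open>x\<^sub>N\<close> enters \<open>T\<^sub>D(z)\<close> only through one factor
  \<open>1 - v\<^sup>-\<^sup>i x\<^sub>N / w\<close> of \<open>Z\<^bsub>i\<^sub>N\<^esub>\<close> in the \<open>e\<close>'s and one factor \<open>(1 - x\<^sub>N / z)\<^sup>k\<close> in the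
  \<open>g\<close>'s. Both tend to 1 as \<open>x\<^sub>N \<rightarrow> 0\<close>, and every coefficient of the normal form of an
  entry of \<open>T\<^sub>D(z)\<close> is a finite sum of products of coefficients of \<open>f\<close>, \<open>g\<close> and \<open>e\<close>.\<close>

inductive opr_tendsto :: "'a filter \<Rightarrow> ('a \<Rightarrow> opr) \<Rightarrow> opr \<Rightarrow> bool" for F :: "'a filter" where
  Nil: "opr_tendsto F (\<lambda>y. []) []"
| Cons: "(\<And>v u. ((\<lambda>y. a y v u) \<longlongrightarrow> a' v u) F) \<Longrightarrow> opr_tendsto F A B
    \<Longrightarrow> opr_tendsto F (\<lambda>y. (a y, k) # A y) ((a', k) # B)"

lemma opr_tendsto_const: "opr_tendsto F (\<lambda>y. A) A"
proof (induction A)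
  case Nil
  show ?case by (rule opr_tendsto.Nil)
next
  case (Cons x A)
  then show ?case
    by (cases x) (auto intro: opr_tendsto.Cons)
qed

lemma opr_tendsto_append:
  "opr_tendsto F A A' \<Longrightarrow> opr_tendsto F B B' \<Longrightarrow> opr_tendsto F (\<lambda>y. A y @ B y) (A' @ B')"
  by (induction rule: opr_tendsto.induct) (auto intro: opr_tendsto.Cons)

lemma opr_tendsto_map:
  "(\<And>x v u. x \<in> set xs \<Longrightarrow> ((\<lambda>y. c y x v u) \<longlongrightarrow> c' x v u) F) \<Longrightarrow>
   opr_tendsto F (\<lambda>y. map (\<lambda>x. (c y x, k x)) xs) (map (\<lambda>x. (c' x, k x)) xs)"
  by (induction xs) (auto intro: opr_tendsto.Nil opr_tendsto.Cons)

lemma opr_tendsto_concat_map: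
  "(\<And>i. i \<in> set xs \<Longrightarrow> opr_tendsto F (\<lambda>y. G y i) (G' i)) \<Longrightarrow>
   opr_tendsto F (\<lambda>y. concat (map (G y) xs)) (concat (map G' xs))"
  by (induction xs) (auto intro: opr_tendsto.Nil opr_tendsto_append)

lemma opr_tendsto_oscal:
  "(\<And>v u. ((\<lambda>y. c y v u) \<longlongrightarrow> c' v u) F) \<Longrightarrow> opr_tendsto F (\<lambda>y. oscal (c y)) (oscal c')"
  unfolding oscal_def by (intro opr_tendsto.Cons opr_tendsto.Nil)

lemma omul_Cons: "omul (x # A) B = omul [x] B @ omul A B"
  by (simp add: omul_def)

lemma opr_tendsto_omul_monomial:
  assumes "\<And>v u. ((\<lambda>y. a y v u) \<longlongrightarrow> a' v u) F" and "opr_tendsto F B B'"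
  shows "opr_tendsto F (\<lambda>y. omul [(a y, k)] (B y)) (omul [(a', k)] B')"
  using assms(2)
proof (induction rule: opr_tendsto.induct)
  case Nil
  show ?case by (simp add: omul_def opr_tendsto.Nil)
next
  case (Cons b b' B B' l)
  have "((\<lambda>y. a y v u * b y v (act v k u)) \<longlongrightarrow> a' v u * b' v (act v k u)) F" for v u
    using assms(1) Cons.hyps(1) by (rule tendsto_mult)
  with Cons.IH show ?case
    by (simp add: omul_def opr_tendsto.Cons)
qed

lemma opr_tendsto_omul:
  "opr_tendsto F A A' \<Longrightarrow> opr_tendsto F B B' \<Longrightarrow>
   opr_tendsto F (\<lambda>y. omul (A y) (B y)) (omul A' B')"
proof (induction rule: opr_tendsto.induct)
  case Nil
  show ?case by (simp add: omul_def opr_tendsto.Nil)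
next
  case (Cons a a' A A' k)
  then show ?case
    by (subst (1 2) omul_Cons) (intro opr_tendsto_append opr_tendsto_omul_monomial)
qed

lemma tendsto_ocoeff:
  "opr_tendsto F A B \<Longrightarrow> ((\<lambda>y. ocoeff (A y) m v u) \<longlongrightarrow> ocoeff B m v u) F"
  by (induction rule: opr_tendsto.induct) (auto simp: ocoeff_def intro!: tendsto_add)

lemma tendsto_one_minus_power_int:
  fixes f :: "'a \<Rightarrow> 'b::real_normed_field"
  assumes "(f \<longlongrightarrow> 0) F"
  shows "((\<lambda>y. (1 - f y) powi k) \<longlongrightarrow> 1) F"
  using tendsto_power_int[OF tendsto_diff[OF tendsto_const assms], of 1 k] by simp

lemma pts_set_last_x:
  "pts D \<noteq> [] \<Longrightarrow>
   pts (set_last_x D y) = butlast (pts D) @ [(fst (last (pts D)), fst (snd (last (pts D))), y)]"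
  by (simp add: set_last_x_def)

lemma mup_set_last_x [simp]: "mup (set_last_x D y) = mup D"
  and mum_set_last_x [simp]: "mum (set_last_x D y) = mum D"
  by (simp_all add: set_last_x_def)

lemma lam_set_last_x:
  assumes "pts D \<noteq> []"
  shows "lam n (set_last_x D y) = lam n D"
proof
  fix j
  show "lam n (set_last_x D y) j = lam n D j"
    unfolding lam_def pts_set_last_x[OF assms]
    by (subst (2) append_butlast_last_id[OF assms, symmetric]) simp
qed

lemma gamma_last_eq_1:
  assumes "trig_divisor n D" "pts D \<noteq> []" "1 \<le> fst (last (pts D))"
  shows "fst (snd (last (pts D))) = 1"
proof -
  have "last (pts D) \<in> set (pts D)" using assms(2) by simp
  with assms(1,3) show ?thesis
    unfolding trig_divisor_def by (cases "last (pts D)") auto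
qed

lemma lam_plus_mum_Dpp:
  assumes "trig_divisor n D" "pts D \<noteq> []" "1 \<le> fst (last (pts D))"
  shows "lam n (Dpp n D) j + mum (Dpp n D) j = lam n D j + mum D j"
proof -
  have "lam n D j = lam n (Dpp n D) j + fst (snd (last (pts D))) * varpi n (fst (last (pts D))) j"
    unfolding lam_def Dpp_def by (subst append_butlast_last_id[OF assms(2), symmetric]) simp
  then show ?thesis using gamma_last_eq_1[OF assms] by (simp add: Dpp_def)
qed

lemma acoef_eq_if_weight_eq:
  assumes "\<And>j. lam n D\<^sub>1 j + mup D\<^sub>1 j + mum D\<^sub>1 j = lam n D\<^sub>2 j + mup D\<^sub>2 j + mum D\<^sub>2 j"
  shows "acoef n D\<^sub>1 = acoef n D\<^sub>2"
proof -
  have "integ_witness n D\<^sub>1 = integ_witness n D\<^sub>2"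
    unfolding integ_witness_def[abs_def] assms ..
  then show ?thesis
    unfolding acoef_def[abs_def] by (rule arg_cong)
qed

lemma acoef_set_last_x: "pts D \<noteq> [] \<Longrightarrow> acoef n (set_last_x D y) = acoef n D"
  by (rule acoef_eq_if_weight_eq) (simp add: lam_set_last_x)

lemma acoef_Dpp:
  assumes "trig_divisor n D" "pts D \<noteq> []" "1 \<le> fst (last (pts D))"
  shows "acoef n (Dpp n D) = acoef n D"
  by (rule acoef_eq_if_weight_eq)
    (use lam_plus_mum_Dpp[OF assms] in \<open>simp add: Dpp_def algebra_simps\<close>)

lemma acoef_set_last_x_Dpp:
  assumes "trig_divisor n D" "pts D \<noteq> []" "1 \<le> fst (last (pts D))"
  shows "acoef n (set_last_x D y) = acoef n (Dpp n D)"
  using acoef_set_last_x[OF assms(2)] acoef_Dpp[OF assms] by simp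

lemma mup_Dpp [simp]: "mup (Dpp n D) = mup D"
  by (simp add: Dpp_def)

lemma
  assumes "acoef n D\<^sub>1 = acoef n D\<^sub>2"
  shows Wfun_eq_if_acoef_eq: "Wfun n D\<^sub>1 = Wfun n D\<^sub>2"
    and Wr_eq_if_acoef_eq: "Wr n D\<^sub>1 = Wr n D\<^sub>2"
    and rtuples_eq_if_acoef_eq: "rtuples n D\<^sub>1 = rtuples n D\<^sub>2"
    and fop_eq_if_acoef_eq: "fop n D\<^sub>1 = fop n D\<^sub>2"
  unfolding Wfun_def[abs_def] Wr_def[abs_def] rtuples_def[abs_def] fop_def[abs_def]
    fcoef_def[abs_def] assms by (rule refl)+

lemma Zfun_set_last_x:
  "pts D \<noteq> [] \<Longrightarrow> Zfun (set_last_x D y) v i x = Zfun (Dpp n D) v i x *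
    (if fst (last (pts D)) = i
     then (1 - v powi (- int i) * y / x) powi (fst (snd (last (pts D)))) else 1)"
  by (simp add: Zfun_def pts_set_last_x Dpp_def)

lemma Zfun_set_last_x_tendsto:
  assumes "pts D \<noteq> []"
  shows "((\<lambda>y. Zfun (set_last_x D y) v i x) \<longlongrightarrow> Zfun (Dpp n D) v i x) (at 0)"
proof -
  have "((\<lambda>y. v powi (- int i) * y / x) \<longlongrightarrow> 0) (at 0)"
    by (intro tendsto_divide_zero tendsto_mult_right_zero tendsto_ident_at)
  then have "((\<lambda>y. Zfun (Dpp n D) v i x * (1 - v powi (- int i) * y / x) powi k)
      \<longlongrightarrow> Zfun (Dpp n D) v i x * 1) (at 0)" for k
    by (intro tendsto_mult_left tendsto_one_minus_power_int)
  then show ?thesis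
    unfolding Zfun_set_last_x[OF assms, where n = n]
    by (cases "fst (last (pts D)) = i") simp_all
qed

lemma ecoef_set_last_x_tendsto:
  assumes "trig_divisor n D" "pts D \<noteq> []" "1 \<le> fst (last (pts D))"
  shows "((\<lambda>y. ecoef n (set_last_x D y) i j z rs v u)
    \<longlongrightarrow> ecoef n (Dpp n D) i j z rs v u) (at 0)"
proof -
  note same_acoef = acoef_set_last_x_Dpp[OF assms]
  have "((\<lambda>y. \<Prod>k\<in>{i..<j}. Zfun (set_last_x D y) v k ((u (k, rs ! (k - i)))\<^sup>2))
     \<longlongrightarrow> (\<Prod>k\<in>{i..<j}. Zfun (Dpp n D) v k ((u (k, rs ! (k - i)))\<^sup>2))) (at 0)"
    by (intro tendsto_prod Zfun_set_last_x_tendsto[OF assms(2)])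
  then show ?thesis
    unfolding ecoef_def Let_def same_acoef mup_set_last_x mup_Dpp
      Wfun_eq_if_acoef_eq[OF same_acoef] Wr_eq_if_acoef_eq[OF same_acoef]
    by (intro tendsto_mult_left tendsto_mult_right)
qed

lemma lamx_set_last_x:
  "pts D \<noteq> [] \<Longrightarrow> lamx n (set_last_x D y) x j = lamx n (Dpp n D) x j +
     (if y = x then fst (snd (last (pts D))) * varpi n (fst (last (pts D))) j else 0)"
  by (simp add: lamx_def pts_set_last_x Dpp_def)

lemma lamx_eq_0_if_not_point:
  assumes "x \<notin> (\<lambda>p. snd (snd p)) ` set (pts D)"
  shows "lamx n D x j = 0"
proof -
  have zero_terms: "map (\<lambda>p. if snd (snd p) = x then fst (snd p) * varpi n (fst p) j else 0) (pts D)
      = map (\<lambda>p. 0) (pts D)"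
    using assms by (intro map_cong) force+
  show ?thesis
    unfolding lamx_def zero_terms by simp
qed

lemma gfun_set_last_x:
  assumes "trig_divisor n D" "pts D \<noteq> []" "1 \<le> fst (last (pts D))"
    and y: "y \<notin> (\<lambda>p. snd (snd p)) ` set (pts (Dpp n D))"
  shows "gfun n (set_last_x D y) i z v u =
    (1 - y / z) powi (- fst (snd (last (pts D))) * varpi n (fst (last (pts D))) i)
    * gfun n (Dpp n D) i z v u"
proof -
  define S where "S = (\<lambda>p. snd (snd p)) ` set (pts (Dpp n D))"
  note same_acoef = acoef_set_last_x_Dpp[OF assms(1-3)]
  have points: "(\<lambda>p. snd (snd p)) ` set (pts (set_last_x D y)) = insert y S"
    by (auto simp: pts_set_last_x[OF assms(2)] S_def Dpp_def)
  have "lamx n (set_last_x D y) x i = lamx n (Dpp n D) x i" if "x \<in> S" for x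
    using lamx_set_last_x[OF assms(2), of n y x i] that y by (auto simp: S_def)
  moreover have
    "lamx n (set_last_x D y) y i = fst (snd (last (pts D))) * varpi n (fst (last (pts D))) i"
    using lamx_set_last_x[OF assms(2), of n y y i] lamx_eq_0_if_not_point[OF y] by simp
  moreover have "finite S" "y \<notin> S"
    using y by (simp_all add: S_def)
  ultimately have "(\<Prod>x\<in>insert y S. (1 - x / z) powi (- lamx n (set_last_x D y) x i))
    = (1 - y / z) powi (- fst (snd (last (pts D))) * varpi n (fst (last (pts D))) i)
      * (\<Prod>x\<in>S. (1 - x / z) powi (- lamx n (Dpp n D) x i))"
    by simp
  then show ?thesis
    unfolding gfun_def points same_acoef mup_set_last_x mup_Dpp
      Wfun_eq_if_acoef_eq[OF same_acoef]
    by (simp add: S_def ac_simps)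
qed

lemma gfun_set_last_x_tendsto:
  assumes "trig_divisor n D" "pts D \<noteq> []" "1 \<le> fst (last (pts D))"
  shows "((\<lambda>y. gfun n (set_last_x D y) i z v u) \<longlongrightarrow> gfun n (Dpp n D) i z v u) (at 0)"
proof -
  let ?e = "- fst (snd (last (pts D))) * varpi n (fst (last (pts D))) i"
  have "finite ((\<lambda>p. snd (snd p)) ` set (pts (Dpp n D)))"
    by simp
  then have "\<forall>\<^sub>F y in at 0. \<forall>x \<in> (\<lambda>p. snd (snd p)) ` set (pts (Dpp n D)). y \<noteq> x"
    by (rule eventually_ball_finite) (simp add: eventually_neq_at_within)
  then have "\<forall>\<^sub>F y in at 0.
      (1 - y / z) powi ?e * gfun n (Dpp n D) i z v u = gfun n (set_last_x D y) i z v u"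
    by eventually_elim (subst gfun_set_last_x[OF assms]; blast)
  moreover have "((\<lambda>y. (1 - y / z) powi ?e * gfun n (Dpp n D) i z v u)
      \<longlongrightarrow> 1 * gfun n (Dpp n D) i z v u) (at 0)"
    by (intro tendsto_mult_right tendsto_one_minus_power_int tendsto_divide_zero tendsto_ident_at)
  ultimately show ?thesis
    by (simp add: tendsto_cong)
qed

lemma eop_set_last_x_tendsto:
  assumes "trig_divisor n D" "pts D \<noteq> []" "1 \<le> fst (last (pts D))"
  shows "opr_tendsto (at 0) (\<lambda>y. eop n (set_last_x D y) i j z) (eop n (Dpp n D) i j z)"
  unfolding eop_def rtuples_eq_if_acoef_eq[OF acoef_set_last_x_Dpp[OF assms]]
  by (auto intro: opr_tendsto_const opr_tendsto_map ecoef_set_last_x_tendsto[OF assms])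

theorem proposition3p21:
  fixes n :: nat and D :: tdiv
  assumes "trig_divisor n D"
    and "integral n D"
    and "pts D \<noteq> []"
    and "1 \<le> fst (last (pts D))"
  shows "\<forall>\<alpha>\<in>{1..n}. \<forall>\<beta>\<in>{1..n}. \<forall>z m v u.
     ((\<lambda>y. ocoeff (Lax n (set_last_x D y) \<alpha> \<beta> z) m v u)
        \<longlongrightarrow> ocoeff (Lax n (Dpp n D) \<alpha> \<beta> z) m v u) (at 0)"
proof (intro ballI allI)
  fix \<alpha> \<beta> z m v u
  note hyps = assms(1,3,4)
  have "opr_tendsto (at 0) (\<lambda>y. Lax n (set_last_x D y) \<alpha> \<beta> z) (Lax n (Dpp n D) \<alpha> \<beta> z)"
    unfolding Lax_def fop_eq_if_acoef_eq[OF acoef_set_last_x_Dpp[OF hyps]]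
    by (intro opr_tendsto_concat_map opr_tendsto_omul opr_tendsto_const opr_tendsto_oscal
        gfun_set_last_x_tendsto[OF hyps] eop_set_last_x_tendsto[OF hyps])
  then show "((\<lambda>y. ocoeff (Lax n (set_last_x D y) \<alpha> \<beta> z) m v u)
      \<longlongrightarrow> ocoeff (Lax n (Dpp n D) \<alpha> \<beta> z) m v u) (at 0)"
    by (rule tendsto_ocoeff)
qed

end
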